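(* Let $D\ge 2$ and let $b_1<b_2<\dots<b_m$ be positive integers with $2\le b_{i+1}/b_i\le D$ for all $1\le i<m$. After $\mathcal{O}(m)$ preprocessing time, for any given integer $t$ one can locate $t$ in the sequence (i.e. find the index $i$ with $b_i\le t<b_{i+1}$, or report $t<b_1$ or $t\ge b_m$) in $\mathcal{O}(\log\log D)$ time.
   Context: Complexity is measured in a unit-cost RAM model in which arithmetic operations on the integers involved, including computing $\lfloor\log_2 x\rfloor$, take constant time. *)

theory Defs
  imports Complex_Main
begin

text \<open>Instruction operands that name registers are fixed (non-negative)
addresses; Load/Store provide indirect addressing. Every executed instruction
costs one time unit, including floor-log2.\<close>

type_synonym mem = "int \<Rightarrow> int"

datatype instr =
    Const nat int
  | Add nat nat nat
  | Sub nat nat nat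
  | Mul nat nat nat
  | Div nat nat nat        \<comment> \<open>M[r] := M[a] div M[b] (floor; x div 0 = 0)\<close>
  | Mod nat nat nat
  | Log2 nat nat
  | Load nat nat
  | Store nat nat
  | Jle nat nat nat
  | Halt

type_synonym prog = "instr list"

definition ilog2 :: "int \<Rightarrow> int" where
  "ilog2 x = (if x > 0 then \<lfloor>log 2 (real_of_int x)\<rfloor> else 0)"

fun exec_instr :: "instr \<Rightarrow> nat \<Rightarrow> mem \<Rightarrow> nat \<times> mem" where
  "exec_instr (Const r c) pc M = (Suc pc, M(int r := c))"
| "exec_instr (Add r a b) pc M = (Suc pc, M(int r := M (int a) + M (int b)))"
| "exec_instr (Sub r a b) pc M = (Suc pc, M(int r := M (int a) - M (int b)))"
| "exec_instr (Mul r a b) pc M = (Suc pc, M(int r := M (int a) * M (int b)))"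
| "exec_instr (Div r a b) pc M = (Suc pc, M(int r := M (int a) div M (int b)))"
| "exec_instr (Mod r a b) pc M = (Suc pc, M(int r := M (int a) mod M (int b)))"
| "exec_instr (Log2 r a) pc M = (Suc pc, M(int r := ilog2 (M (int a))))"
| "exec_instr (Load r a) pc M = (Suc pc, M(int r := M (M (int a))))"
| "exec_instr (Store a r) pc M = (Suc pc, M(M (int a) := M (int r)))"
| "exec_instr (Jle a b tgt) pc M = ((if M (int a) \<le> M (int b) then tgt else Suc pc), M)"
| "exec_instr Halt pc M = (pc, M)"

definition halted :: "prog \<Rightarrow> nat \<times> mem \<Rightarrow> bool" where
  "halted P c \<longleftrightarrow> fst c \<ge> length P \<or> P ! fst c = Halt"

definition step :: "prog \<Rightarrow> nat \<times> mem \<Rightarrow> nat \<times> mem" where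
  "step P c = (if halted P c then c else exec_instr (P ! fst c) (fst c) (snd c))"

definition conf :: "prog \<Rightarrow> mem \<Rightarrow> nat \<Rightarrow> nat \<times> mem" where
  "conf P M0 j = (step P ^^ j) (0, M0)"

text \<open>Program P, started on memory M0, halts after at most k steps with final
memory M1, and every memory cell at every intermediate configuration has
absolute value at most B (word-size restriction).\<close>
definition runs :: "prog \<Rightarrow> mem \<Rightarrow> nat \<Rightarrow> real \<Rightarrow> mem \<Rightarrow> bool" where
  "runs P M0 k B M1 \<longleftrightarrow>
     (\<exists>j\<le>k. halted P (conf P M0 j) \<and> snd (conf P M0 j) = M1 \<and>
        (\<forall>i\<le>j. \<forall>a. real_of_int \<bar>snd (conf P M0 i) a\<bar> \<le> B))"

definition input_mem :: "nat \<Rightarrow> (nat \<Rightarrow> int) \<Rightarrow> mem" where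
  "input_mem m b = (\<lambda>a. if a = 0 then int m
                       else if -int m \<le> a \<and> a \<le> -1 then b (nat (-a)) else 0)"

text \<open>Rank of t: the number of b_i (1 \<le> i \<le> m) with b_i \<le> t. Rank i with
1 \<le> i < m means b_i \<le> t < b_(i+1); rank 0 means t < b_1; rank m means t \<ge> b_m.\<close>
definition rank :: "nat \<Rightarrow> (nat \<Rightarrow> int) \<Rightarrow> int \<Rightarrow> nat" where
  "rank m b t = card {i \<in> {1..m}. b i \<le> t}"

end

theory Submission
  imports Defs
begin

text \<open>Let e_i = \<lfloor>log2 b_i\<rfloor>. Since b_(i+1) \<ge> 2 b_i the exponents e_i strictly increase, and
since b_(i+1) \<le> D b_i they grow by less than log2 D + 1 per step. Cut the exponent range
[e_1, e_m] into m buckets of width w = (e_m - e_1) div m + 1 \<le> log2 D + 2 and store, for every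
bucket, the number of keys in it or below it; this takes O(m) steps. A query t with
b_1 \<le> t < b_m computes the bucket of \<lfloor>log2 t\<rfloor> with one Log2 instruction; the table then confines
the rank of t to an interval of keys lying in a single bucket. Their exponents are distinct and lie
in a window of length w, so the interval has at most w keys and binary search finishes in
O(log w) = O(log log D) steps. All words stay below 103 max(2, m, b_m, |t|).\<close>

section \<open>Bounded execution of word-RAM programs\<close>

definition bounded_mem :: "real \<Rightarrow> mem \<Rightarrow> bool" where
  "bounded_mem B M \<longleftrightarrow> (\<forall>a. real_of_int \<bar>M a\<bar> \<le> B)"

definition reaches :: "prog \<Rightarrow> real \<Rightarrow> nat \<times> mem \<Rightarrow> nat \<Rightarrow> nat \<times> mem \<Rightarrow> bool" where
  "reaches P B c n c' \<longleftrightarrow>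
     (step P ^^ n) c = c' \<and> (\<forall>i\<le>n. bounded_mem B (snd ((step P ^^ i) c)))"

lemma bounded_mem_upd [simp]:
  "bounded_mem B M \<Longrightarrow> real_of_int \<bar>v\<bar> \<le> B \<Longrightarrow> bounded_mem B (M(a := v))"
  by (auto simp: bounded_mem_def)

lemma bounded_mem_mono: "bounded_mem B M \<Longrightarrow> B \<le> B' \<Longrightarrow> bounded_mem B' M"
  unfolding bounded_mem_def by (meson order_trans)

lemma reaches_bounded_mem: "reaches P B c n c' \<Longrightarrow> bounded_mem B (snd c')"
  unfolding reaches_def by blast

lemma reaches_0_iff: "reaches P B c 0 c' \<longleftrightarrow> c' = c \<and> bounded_mem B (snd c)"
  by (auto simp: reaches_def)

lemma reaches_add:
  assumes "reaches P B c n1 c'" and "reaches P B c' n2 c''"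
  shows "reaches P B c (n1 + n2) c''"
  unfolding reaches_def
proof (intro conjI allI impI)
  show "(step P ^^ (n1 + n2)) c = c''"
    using assms by (simp add: reaches_def funpow_add add.commute[of n1])
next
  fix i
  assume "i \<le> n1 + n2"
  show "bounded_mem B (snd ((step P ^^ i) c))"
  proof (cases "i \<le> n1")
    case True
    with assms(1) show ?thesis
      by (auto simp: reaches_def)
  next
    case False
    define j where "j = i - n1"
    have i: "i = j + n1" and "j \<le> n2"
      using False \<open>i \<le> n1 + n2\<close> unfolding j_def by simp_all
    have "(step P ^^ i) c = (step P ^^ j) c'"
      using assms(1) unfolding i by (simp add: reaches_def funpow_add)
    with \<open>j \<le> n2\<close> assms(2) show ?thesis
      by (auto simp: reaches_def)
  qed
qed

lemma reaches_Suc_iff: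
  assumes "pc < length P" and "P ! pc \<noteq> Halt"
  shows "reaches P B (pc, M) (Suc n) c' \<longleftrightarrow>
    bounded_mem B M \<and> reaches P B (exec_instr (P ! pc) pc M) n c'"
proof -
  have step: "step P (pc, M) = exec_instr (P ! pc) pc M"
    using assms by (simp add: step_def halted_def)
  have "(\<forall>i\<le>Suc n. Q i) \<longleftrightarrow> Q 0 \<and> (\<forall>i\<le>n. Q (Suc i))" for Q :: "nat \<Rightarrow> bool"
    by (metis Suc_le_mono le0 not0_implies_Suc)
  then show ?thesis
    by (simp add: reaches_def funpow_Suc_right step del: funpow.simps) blast
qed

lemma reaches_numeral_iff:
  "pc < length P \<Longrightarrow> P ! pc \<noteq> Halt \<Longrightarrow> reaches P B (pc, M) (numeral k) c' \<longleftrightarrow>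
    bounded_mem B M \<and> reaches P B (exec_instr (P ! pc) pc M) (pred_numeral k) c'"
  by (simp add: numeral_eq_Suc reaches_Suc_iff)

text \<open>With these rules the simplifier executes a straight-line run of known length symbolically,
discharging the side conditions on the program counter and on the word size as it goes.\<close>
lemmas reaches_simps = reaches_0_iff reaches_Suc_iff reaches_numeral_iff

lemma runs_if_reaches:
  "reaches P B (0, M0) n (pc, M1) \<Longrightarrow> length P \<le> pc \<Longrightarrow> n \<le> k \<Longrightarrow> runs P M0 k B M1"
  unfolding runs_def reaches_def conf_def halted_def bounded_mem_def
  by (rule exI[of _ n]) auto

lemma reaches_loop:
  assumes bounded: "\<And>i M. I i M \<Longrightarrow> bounded_mem B M"
    and body: "\<And>i M. I i M \<Longrightarrow> i < N \<Longrightarrow>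
      \<exists>n M'. reaches P B (pc, M) n (pc, M') \<and> n \<le> c \<and> I (Suc i) M'"
  shows "I i M \<Longrightarrow> i \<le> N \<Longrightarrow>
    \<exists>n M'. reaches P B (pc, M) n (pc, M') \<and> n \<le> c * (N - i) \<and> I N M'"
proof (induction "N - i" arbitrary: i M)
  case 0
  then show ?case
    using bounded by (intro exI[of _ 0] exI[of _ M]) (auto simp: reaches_0_iff)
next
  case (Suc k)
  then have "i < N"
    by simp
  then obtain n1 M1 where 1: "reaches P B (pc, M) n1 (pc, M1)" "n1 \<le> c" "I (Suc i) M1"
    using body[OF Suc.prems(1)] by blast
  have "k = N - Suc i" and "Suc i \<le> N"
    using Suc.hyps(2) by simp_all
  then obtain n2 M2 where 2: "reaches P B (pc, M1) n2 (pc, M2)" "n2 \<le> c * (N - Suc i)" "I N M2"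
    using Suc.hyps(1) 1(3) by blast
  have "c * (N - i) = c + c * (N - Suc i)"
    using \<open>i < N\<close> by (metis Suc_diff_Suc mult_Suc_right)
  then have "n1 + n2 \<le> c * (N - i)"
    using 1(2) 2(2) by linarith
  then show ?case
    using reaches_add[OF 1(1) 2(1)] 2(3) by blast
qed

lemma ilog2_nonneg: "0 \<le> ilog2 x"
  by (simp add: ilog2_def)

lemma ilog2_mono: "0 < x \<Longrightarrow> x \<le> y \<Longrightarrow> ilog2 x \<le> ilog2 y"
  unfolding ilog2_def by (auto intro!: floor_mono)

lemma ilog2_less_imp_less:
  assumes "ilog2 x < ilog2 y"
  shows "x < y"
proof (rule ccontr)
  assume "\<not> x < y"
  then have "ilog2 y \<le> ilog2 x"
    using ilog2_mono[of y x] ilog2_nonneg[of x] by (cases "0 < y") (simp_all add: ilog2_def)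
  with assms show False
    by simp
qed

lemma ilog2_double:
  assumes "0 < x" and "2 * x \<le> y"
  shows "ilog2 x + 1 \<le> ilog2 y"
proof -
  have "1 + log 2 (real_of_int x) = log 2 (2 * real_of_int x)"
    using assms by (simp add: log_mult)
  also have "\<dots> \<le> log 2 (real_of_int y)"
    using assms by simp
  finally have "\<lfloor>1 + log 2 (real_of_int x)\<rfloor> \<le> \<lfloor>log 2 (real_of_int y)\<rfloor>"
    by (rule floor_mono)
  then show ?thesis
    using assms unfolding ilog2_def by simp
qed

lemma ilog2_ratio:
  assumes "0 < x" and "0 < y" and "real_of_int y \<le> D * real_of_int x"
  shows "real_of_int (ilog2 y) < real_of_int (ilog2 x) + log 2 D + 1"
proof -
  have "0 < D"
    using assms by (smt (verit) mult_nonpos_nonneg of_int_pos)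
  have "real_of_int (ilog2 y) \<le> log 2 (real_of_int y)"
    using assms unfolding ilog2_def by simp
  also have "\<dots> \<le> log 2 (D * real_of_int x)"
    using assms by simp
  also have "\<dots> = log 2 D + log 2 (real_of_int x)"
    using assms \<open>0 < D\<close> by (simp add: log_mult)
  also have "\<dots> < log 2 D + real_of_int (ilog2 x) + 1"
    using assms unfolding ilog2_def by (simp add: real_of_int_floor_add_one_gt)
  finally show ?thesis
    by simp
qed

lemma ilog2_less_self:
  assumes "0 < x"
  shows "ilog2 x < x"
proof -
  have "real (nat x) < 2 ^ nat x"
    by (metis less_exp of_nat_less_iff of_nat_numeral of_nat_power)
  also have "\<dots> = 2 powr real (nat x)"
    by (simp add: powr_realpow)
  finally have "real_of_int x < 2 powr real_of_int x"
    using assms by simp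
  then have "log 2 (real_of_int x) < real_of_int x"
    using assms by (simp add: log_less_iff)
  then show ?thesis
    using assms unfolding ilog2_def by (simp add: floor_less_iff)
qed

lemma div_mult_le_int: "0 < w \<Longrightarrow> (y::int) div w * w \<le> y"
  using div_mult_mod_eq[of y w] pos_mod_sign[of w y] by linarith

lemma less_div_add_one_mult_int:
  assumes "0 < w"
  shows "(y::int) < (y div w + 1) * w"
proof -
  have "y mod w < w"
    using assms by simp
  moreover have "(y div w + 1) * w = y div w * w + w"
    by (simp add: distrib_right)
  ultimately show ?thesis
    using div_mult_mod_eq[of y w] by linarith
qed

lemma down_closed_eq_atLeastAtMost_card:
  assumes "A \<subseteq> {1..(n::nat)}" and "\<And>k j. k \<in> A \<Longrightarrow> 1 \<le> j \<Longrightarrow> j \<le> k \<Longrightarrow> j \<in> A"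
  shows "A = {1..card A}"
proof (cases "A = {}")
  case False
  have "finite A"
    using assms(1) finite_subset by blast
  define p where "p = Max A"
  have "A = {1..p}"
  proof
    show "A \<subseteq> {1..p}"
      using assms(1) Max_ge[OF \<open>finite A\<close>] unfolding p_def by auto
    show "{1..p} \<subseteq> A"
      using assms(2)[OF Max_in[OF \<open>finite A\<close> False]] unfolding p_def by auto
  qed
  then show ?thesis
    by simp
qed simp

lemma rank_eqI:
  assumes "r \<le> m" and "\<And>k. 1 \<le> k \<Longrightarrow> k \<le> m \<Longrightarrow> b k \<le> t \<longleftrightarrow> k \<le> r"
  shows "rank m b t = r"
proof -
  have "{i \<in> {1..m}. b i \<le> t} = {1..r}"
    using assms by auto
  then show ?thesis
    unfolding rank_def by simp
qed

definition log_cost :: "real \<Rightarrow> nat \<Rightarrow> real" where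
  "log_cost c s = (if s = 0 then 0 else c * (1 + log 2 (real s)))"

lemma log_cost_nonneg: "0 \<le> c \<Longrightarrow> 0 \<le> log_cost c s"
  unfolding log_cost_def by simp

lemma log_cost_halve:
  assumes "0 \<le> c" and "1 \<le> s" and "s' \<le> s div 2"
  shows "c + log_cost c s' \<le> log_cost c s"
proof (cases "s' = 0")
  case False
  have "1 + log 2 (real s') = log 2 (real (2 * s'))"
    using False by (simp add: log_mult)
  also have "\<dots> \<le> log 2 (real s)"
    using False assms(3) by simp
  finally show ?thesis
    using False assms(1,2) mult_left_mono[of "1 + log 2 (real s')" "log 2 (real s)" c]
    unfolding log_cost_def by (simp add: distrib_left)
next
  case True
  have "0 \<le> log 2 (real s)"
    using assms(2) by simp
  then have "c * 1 \<le> c * (1 + log 2 (real s))"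
    using assms(1) by (intro mult_left_mono) simp_all
  then show ?thesis
    using True assms(2) unfolding log_cost_def by simp
qed

lemma log_cost_le:
  assumes "0 \<le> c" and "real s \<le> x" and "1 \<le> x"
  shows "log_cost c s \<le> c * (1 + log 2 x)"
proof (cases "s = 0")
  case False
  then have "log 2 (real s) \<le> log 2 x"
    using assms(2) by simp
  then show ?thesis
    using False assms(1) unfolding log_cost_def by (simp add: mult_left_mono)
qed (use assms in \<open>simp add: log_cost_def\<close>)

lemma le_pow8: "2 \<le> (x::real) \<Longrightarrow> 103 * x \<le> x ^ 8"
proof -
  assume "2 \<le> x"
  then have "(2::real) ^ 7 \<le> x ^ 7"
    by (intro power_mono) simp_all
  then have "103 * x \<le> x ^ 7 * x"
    using \<open>2 \<le> x\<close> by (intro mult_right_mono) simp_all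
  then show ?thesis
    by (simp add: power_Suc2[symmetric])
qed

section \<open>Exponent buckets of a doubling sequence\<close>

locale doubling_seq =
  fixes m :: nat and b :: "nat \<Rightarrow> int" and D :: real
  assumes D_ge: "D \<ge> 2" and m_pos: "m \<ge> 1" and b_positive: "\<forall>i\<in>{1..m}. b i > 0"
    and b_ratio: "\<forall>i. 1 \<le> i \<and> i < m \<longrightarrow>
      2 \<le> real_of_int (b (Suc i)) / real_of_int (b i) \<and>
      real_of_int (b (Suc i)) / real_of_int (b i) \<le> D"
begin

definition expo :: "nat \<Rightarrow> int" where
  "expo i = ilog2 (b i)"

definition width :: int where
  "width = (expo m - expo 1) div int m + 1"

definition bucket :: "nat \<Rightarrow> int" where
  "bucket i = (expo i - expo 1) div width"

definition bucket_rank :: "int \<Rightarrow> nat" where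
  "bucket_rank x = card {k \<in> {1..m}. bucket k \<le> x}"

definition query_bucket :: "int \<Rightarrow> int" where
  "query_bucket t = (ilog2 t - expo 1) div width"

lemma b_pos: "1 \<le> i \<Longrightarrow> i \<le> m \<Longrightarrow> 0 < b i"
  using b_positive by auto

lemma b_double: "1 \<le> i \<Longrightarrow> i < m \<Longrightarrow> 2 * b i \<le> b (Suc i)"
  using b_ratio b_pos[of i] by (fastforce simp: le_divide_eq)

lemma b_Suc_le: "1 \<le> i \<Longrightarrow> i < m \<Longrightarrow> real_of_int (b (Suc i)) \<le> D * real_of_int (b i)"
  using b_ratio b_pos[of i] by (fastforce simp: divide_le_eq)

lemma b_strict_mono: "1 \<le> i \<Longrightarrow> i < j \<Longrightarrow> j \<le> m \<Longrightarrow> b i < b j"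
proof (induction j)
  case (Suc j)
  have "b j < b (Suc j)" if "1 \<le> j"
    using b_double[of j] b_pos[of j] that Suc.prems by simp
  with Suc show ?case
    by (cases "i = j") (auto intro: less_trans)
qed simp

lemma b_mono: "1 \<le> i \<Longrightarrow> i \<le> j \<Longrightarrow> j \<le> m \<Longrightarrow> b i \<le> b j"
  using b_strict_mono[of i j] by (cases "i = j") auto

lemma expo_nonneg: "0 \<le> expo i"
  by (simp add: expo_def ilog2_nonneg)

lemma expo_Suc: "1 \<le> i \<Longrightarrow> i < m \<Longrightarrow> expo i + 1 \<le> expo (Suc i)"
  unfolding expo_def by (rule ilog2_double[OF b_pos b_double]) simp_all

lemma expo_Suc_less:
  "1 \<le> i \<Longrightarrow> i < m \<Longrightarrow> real_of_int (expo (Suc i)) < real_of_int (expo i) + log 2 D + 1"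
  unfolding expo_def by (rule ilog2_ratio[OF b_pos b_pos b_Suc_le]) simp_all

lemma expo_gap: "1 \<le> i \<Longrightarrow> i \<le> j \<Longrightarrow> j \<le> m \<Longrightarrow> expo i + int (j - i) \<le> expo j"
proof (induction j)
  case (Suc j)
  show ?case
  proof (cases "i = Suc j")
    case False
    then have "i \<le> j"
      using Suc.prems by simp
    then have "expo i + int (j - i) \<le> expo j" and "expo j + 1 \<le> expo (Suc j)"
      and "int (Suc j - i) = int (j - i) + 1"
      using Suc expo_Suc[of j] by (simp_all add: Suc_diff_le)
    then show ?thesis
      by linarith
  qed simp
qed simp

lemma expo_upper:
  "1 \<le> j \<Longrightarrow> j \<le> m \<Longrightarrow>
    real_of_int (expo j) \<le> real_of_int (expo 1) + real (j - 1) * (log 2 D + 1)"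
proof (induction j)
  case (Suc j)
  show ?case
  proof (cases "j = 0")
    case False
    then have "real_of_int (expo j) \<le> real_of_int (expo 1) + real (j - 1) * (log 2 D + 1)"
      using Suc by simp
    moreover have "real_of_int (expo (Suc j)) < real_of_int (expo j) + log 2 D + 1"
      using False Suc.prems by (intro expo_Suc_less) simp_all
    moreover have "real (Suc j - 1) * (log 2 D + 1) = real (j - 1) * (log 2 D + 1) + (log 2 D + 1)"
      using False by (simp add: of_nat_diff algebra_simps)
    ultimately show ?thesis
      by linarith
  qed simp
qed simp

lemma width_pos: "0 < width"
  using expo_gap[of 1 m] m_pos unfolding width_def by (simp add: pos_imp_zdiv_nonneg_iff)

lemma width_upper: "real_of_int width \<le> log 2 D + 2"
proof -
  have "real_of_int (expo m - expo 1) \<le> real (m - 1) * (log 2 D + 1)"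
    using expo_upper[of m] m_pos by simp
  also have "\<dots> \<le> real m * (log 2 D + 1)"
    using D_ge by (intro mult_right_mono) simp_all
  finally have "real_of_int ((expo m - expo 1) div int m * int m) \<le> real m * (log 2 D + 1)"
    using div_mult_le_int[of "int m" "expo m - expo 1"] m_pos by linarith
  then have "real_of_int ((expo m - expo 1) div int m) \<le> log 2 D + 1"
    using m_pos by (simp add: mult.commute)
  then show ?thesis
    unfolding width_def by simp
qed

lemma spread_less: "expo m - expo 1 < int m * width"
  using less_div_add_one_mult_int[of "int m" "expo m - expo 1"] m_pos unfolding width_def
  by (simp add: mult.commute)

lemma bucket_mono: "1 \<le> i \<Longrightarrow> i \<le> j \<Longrightarrow> j \<le> m \<Longrightarrow> bucket i \<le> bucket j"
  unfolding bucket_def using expo_gap[of i j] width_pos by (intro zdiv_mono1) auto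

lemma bucket_nonneg: "1 \<le> i \<Longrightarrow> i \<le> m \<Longrightarrow> 0 \<le> bucket i"
  using bucket_mono[of 1 i] by (simp add: bucket_def)

lemma bucket_less: "1 \<le> i \<Longrightarrow> i \<le> m \<Longrightarrow> bucket i < int m"
proof -
  assume "1 \<le> i" "i \<le> m"
  have "bucket m * width \<le> expo m - expo 1"
    unfolding bucket_def using width_pos by (rule div_mult_le_int)
  then have "bucket m < int m"
    using spread_less width_pos by (smt (verit) mult_right_mono)
  then show ?thesis
    using bucket_mono[of i m] \<open>1 \<le> i\<close> \<open>i \<le> m\<close> by simp
qed

lemma bucket_rank_eq: "{k \<in> {1..m}. bucket k \<le> x} = {1..bucket_rank x}"
  unfolding bucket_rank_def
  by (rule down_closed_eq_atLeastAtMost_card[of _ m]) (auto intro: order_trans[OF bucket_mono])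

lemma le_bucket_rank_iff: "1 \<le> k \<Longrightarrow> k \<le> m \<Longrightarrow> k \<le> bucket_rank x \<longleftrightarrow> bucket k \<le> x"
  using bucket_rank_eq[of x] by (metis (no_types, lifting) atLeastAtMost_iff mem_Collect_eq)

lemma bucket_rank_le: "bucket_rank x \<le> m"
  unfolding bucket_rank_def by (rule order_trans[OF card_mono[of "{1..m}"]]) auto

lemma bucket_rank_mono: "x \<le> y \<Longrightarrow> bucket_rank x \<le> bucket_rank y"
  unfolding bucket_rank_def by (rule card_mono) auto

lemma bucket_rank_neg: "x < 0 \<Longrightarrow> bucket_rank x = 0"
  unfolding bucket_rank_def using bucket_nonneg by fastforce

lemma bucket_rank_pos: "0 \<le> x \<Longrightarrow> 1 \<le> bucket_rank x"
  using le_bucket_rank_iff[of 1 x] m_pos by (simp add: bucket_def)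

lemma bucket_rank_skip: "\<forall>k\<in>{1..m}. bucket k \<noteq> x \<Longrightarrow> bucket_rank (x - 1) = bucket_rank x"
  unfolding bucket_rank_def by (metis (no_types, opaque_lifting) zle_diff1_eq order.order_iff_strict)

text \<open>The keys of one bucket have distinct exponents in a window of length width.\<close>
lemma bucket_size: "int (bucket_rank x) - int (bucket_rank (x - 1)) \<le> width"
proof (cases "bucket_rank (x - 1) < bucket_rank x")
  case True
  define lo where "lo = Suc (bucket_rank (x - 1))"
  define hi where "hi = bucket_rank x"
  have range: "1 \<le> lo" "lo \<le> hi" "hi \<le> m"
    using True bucket_rank_le unfolding lo_def hi_def by auto
  have "bucket lo = x" and "bucket hi = x"
    using le_bucket_rank_iff[of lo "x - 1"] le_bucket_rank_iff[of hi x] bucket_mono[of lo hi] range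
    unfolding lo_def hi_def by auto
  then have "x * width \<le> expo lo - expo 1" and "expo hi - expo 1 < (x + 1) * width"
    using div_mult_le_int[OF width_pos] less_div_add_one_mult_int[OF width_pos]
    unfolding bucket_def by metis+
  moreover have "expo lo + int (hi - lo) \<le> expo hi"
    using expo_gap range by simp
  moreover have "(x + 1) * width = x * width + width"
    by (simp add: distrib_right)
  ultimately show ?thesis
    using range unfolding lo_def hi_def by linarith
qed (use width_pos in simp)

lemma le_query_if_le_bucket_rank:
  assumes "1 \<le> k" and "k \<le> bucket_rank (query_bucket t - 1)"
  shows "b k \<le> t"
proof -
  have "k \<le> m"
    using assms(2) bucket_rank_le order_trans by blast
  then have "bucket k < query_bucket t"
    using le_bucket_rank_iff[OF assms(1)] assms(2) by fastforce
  then have "expo k < ilog2 t"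
    unfolding bucket_def query_bucket_def using zdiv_mono1[OF _ width_pos]
    by (meson diff_right_mono not_le)
  then show ?thesis
    unfolding expo_def by (simp add: ilog2_less_imp_less order.strict_implies_order)
qed

lemma query_less_if_bucket_rank_less:
  assumes "bucket_rank (query_bucket t) < k" and "k \<le> m"
  shows "t < b k"
proof -
  have "1 \<le> k"
    using assms(1) by simp
  then have "query_bucket t < bucket k"
    using le_bucket_rank_iff[OF \<open>1 \<le> k\<close> assms(2), of "query_bucket t"] assms(1) by simp
  then have "ilog2 t < expo k"
    unfolding bucket_def query_bucket_def using zdiv_mono1[OF _ width_pos]
    by (meson diff_right_mono not_le)
  then show ?thesis
    unfolding expo_def by (rule ilog2_less_imp_less)
qed

lemma query_bucket_bounds:
  assumes "b 1 \<le> t" and "t < b m"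
  shows "0 \<le> query_bucket t" and "query_bucket t < int m"
proof -
  have "0 < b 1"
    using b_pos m_pos by simp
  then have "expo 1 \<le> ilog2 t" and "ilog2 t \<le> expo m"
    unfolding expo_def using ilog2_mono assms by auto
  then show "0 \<le> query_bucket t"
    unfolding query_bucket_def using width_pos by (simp add: pos_imp_zdiv_nonneg_iff)
  have "query_bucket t \<le> bucket m"
    unfolding query_bucket_def bucket_def using \<open>ilog2 t \<le> expo m\<close> width_pos
    by (intro zdiv_mono1) auto
  then show "query_bucket t < int m"
    using bucket_less[of m] m_pos by simp
qed

definition rank_bracket :: "int \<Rightarrow> nat \<Rightarrow> nat \<Rightarrow> bool" where
  "rank_bracket t lo hi \<longleftrightarrow> lo \<le> hi \<and> hi \<le> m \<and>
     (\<forall>k. 1 \<le> k \<longrightarrow> k \<le> lo \<longrightarrow> b k \<le> t) \<and> (\<forall>k. hi < k \<longrightarrow> k \<le> m \<longrightarrow> t < b k)"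

lemma rank_bracket_rank:
  assumes "rank_bracket t r r"
  shows "rank m b t = r"
proof (rule rank_eqI)
  show "r \<le> m"
    using assms by (simp add: rank_bracket_def)
  show "b k \<le> t \<longleftrightarrow> k \<le> r" if "1 \<le> k" and "k \<le> m" for k
    using assms that unfolding rank_bracket_def by (meson not_le)
qed

lemma rank_bracket_query_bucket:
  "rank_bracket t (bucket_rank (query_bucket t - 1)) (bucket_rank (query_bucket t))"
  unfolding rank_bracket_def
proof (intro conjI allI impI)
  show "bucket_rank (query_bucket t - 1) \<le> bucket_rank (query_bucket t)"
    by (rule bucket_rank_mono) simp
qed (simp_all add: bucket_rank_le le_query_if_le_bucket_rank query_less_if_bucket_rank_less)

lemma rank_bracket_split:
  assumes "rank_bracket t lo hi" and "lo < hi"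
  defines "mid \<equiv> (lo + hi + 1) div 2"
  shows "if b mid \<le> t then rank_bracket t mid hi else rank_bracket t lo (mid - 1)"
proof -
  have mid: "lo < mid" "mid \<le> hi" "1 \<le> mid"
    using assms(2) unfolding mid_def by auto
  show ?thesis
  proof (cases "b mid \<le> t")
    case True
    then have "b k \<le> t" if "1 \<le> k" "k \<le> mid" for k
      using b_mono[of k mid] that mid assms(1) unfolding rank_bracket_def by force
    then show ?thesis
      using True mid assms(1) unfolding rank_bracket_def by auto
  next
    case False
    then have "t < b k" if "mid - 1 < k" "k \<le> m" for k
      using b_mono[of mid k] that mid by force
    then show ?thesis
      using False mid assms(1) unfolding rank_bracket_def by auto
  qed
qed

definition magnitude :: int where
  "magnitude = max 2 (max (int m) (b m))"

lemma magnitude_ge: "2 \<le> magnitude" "int m \<le> magnitude"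
  unfolding magnitude_def by simp_all

lemma b_le_magnitude: "1 \<le> k \<Longrightarrow> k \<le> m \<Longrightarrow> b k \<le> magnitude"
  using b_mono[of k m] unfolding magnitude_def by simp

lemma expo_less_magnitude: "1 \<le> k \<Longrightarrow> k \<le> m \<Longrightarrow> expo k < magnitude"
  using b_le_magnitude[of k] ilog2_less_self[OF b_pos[of k]] unfolding expo_def by simp

lemma input_mem_simps:
  "input_mem m b 0 = int m" "0 < a \<Longrightarrow> input_mem m b a = 0"
  "1 \<le> k \<Longrightarrow> k \<le> m \<Longrightarrow> input_mem m b (- int k) = b k"
  by (simp_all add: input_mem_def)

lemma input_mem_1: "input_mem m b (- 1) = b 1"
  using input_mem_simps(3)[of 1] m_pos by simp

end

section \<open>Preprocessing\<close>

text \<open>Registers: 1 = m, 2 = expo 1, 3 = width, 4 = 1, 8 = 0, 9 = 101, 10 = 100, 5 = loop counter,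
6, 7, 11 = scratch. The table occupies cells 100 .. 100 + m, cell 101 + x being meant for
bucket_rank x. The first loop (pc 14) writes i into cell 101 + bucket i, so each nonempty
bucket ends up holding its last key, i.e. its bucket_rank; the second loop (pc 26) copies the
preceding entry into every still-empty cell.\<close>
definition Pre :: prog where "Pre = [
 Const 4 1, Add 1 0 8, Sub 6 8 4, Load 7 6, Log2 2 7, Sub 6 8 1, Load 7 6, Log2 7 7,
 Sub 7 7 2, Div 3 7 1, Add 3 3 4, Const 9 101, Const 10 100, Const 5 1,
 Jle 5 1 16, Jle 8 8 25, Sub 6 8 5, Load 7 6, Log2 7 7, Sub 7 7 2, Div 7 7 3, Add 7 7 9,
 Store 7 5, Add 5 5 4, Jle 8 8 14,
 Const 5 2, Jle 5 1 28, Jle 8 8 37, Add 6 5 10, Load 7 6, Jle 7 8 32, Jle 8 8 35,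
 Sub 11 6 4, Load 7 11, Store 6 7, Add 5 5 4, Jle 8 8 26]"

context doubling_seq
begin

definition pre_registers :: "mem \<Rightarrow> bool" where
  "pre_registers M \<longleftrightarrow> M 1 = int m \<and> M 2 = expo 1 \<and> M 3 = width \<and> M 4 = 1 \<and> M 8 = 0 \<and>
     M 9 = 101 \<and> M 10 = 100 \<and> (\<forall>a<0. M a = input_mem m b a)"

definition preprocessed :: "mem \<Rightarrow> bool" where
  "preprocessed M \<longleftrightarrow> pre_registers M \<and>
     (\<forall>x. - 1 \<le> x \<longrightarrow> x < int m \<longrightarrow> M (101 + x) = int (bucket_rank x))"

definition partial_rank :: "nat \<Rightarrow> int \<Rightarrow> int" where
  "partial_rank i x =
     (if \<exists>k\<in>{1..<i}. bucket k = x then int (card {k \<in> {1..<i}. bucket k \<le> x}) else 0)"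

definition filled_rank :: "nat \<Rightarrow> int \<Rightarrow> int" where
  "filled_rank j x =
     (if x + 2 \<le> int j \<or> (\<exists>k\<in>{1..m}. bucket k = x) then int (bucket_rank x) else 0)"

lemma partial_rank_Suc:
  assumes "1 \<le> i" and "i \<le> m"
  shows "partial_rank (Suc i) x = (if x = bucket i then int i else partial_rank i x)"
proof (cases "x = bucket i")
  case True
  then have "{k \<in> {1..<Suc i}. bucket k \<le> x} = {1..<Suc i}"
    using bucket_mono assms by auto
  then show ?thesis
    using True assms unfolding partial_rank_def by auto
next
  case False
  have "{k \<in> {1..<Suc i}. bucket k \<le> x} = {k \<in> {1..<i}. bucket k \<le> x}"
    if "k \<in> {1..<i}" "bucket k = x" for k
    using that False bucket_mono[of k i] assms by (auto simp: less_Suc_eq)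
  then show ?thesis
    using False unfolding partial_rank_def by (auto simp: less_Suc_eq)
qed

lemma partial_rank_all:
  "partial_rank (Suc m) x = (if \<exists>k\<in>{1..m}. bucket k = x then int (bucket_rank x) else 0)"
  by (simp add: partial_rank_def bucket_rank_def atLeastLessThanSuc_atLeastAtMost)

lemma partial_rank_all_eq_filled_rank_2:
  assumes "- 1 \<le> x"
  shows "partial_rank (Suc m) x = filled_rank 2 x"
proof -
  have "bucket 1 = 0" and "1 \<in> {1..m}"
    using m_pos by (simp_all add: bucket_def)
  then have "x = - 1" if "x + 2 \<le> 2" and "\<forall>k\<in>{1..m}. bucket k \<noteq> x"
    using that assms by (cases "x = 0") auto
  then show ?thesis
    unfolding partial_rank_all filled_rank_def using bucket_rank_neg[of "- 1"] by auto
qed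

lemma filled_rank_Suc:
  "filled_rank (Suc j) x = (if x = int j - 1 then int (bucket_rank x) else filled_rank j x)"
  unfolding filled_rank_def by auto

end

locale doubling_seq_bounded = doubling_seq +
  fixes B :: real
  assumes B_ge: "103 * real_of_int magnitude \<le> B"
begin

lemma bounded_mem_upd_small:
  assumes "bounded_mem B M" and "\<bar>v\<bar> \<le> 101 + 2 * magnitude"
  shows "bounded_mem B (M(a := v))"
proof -
  have "real_of_int \<bar>v\<bar> \<le> 103 * real_of_int magnitude"
    using assms(2) magnitude_ge by linarith
  then show ?thesis
    using assms(1) B_ge by simp
qed

lemma bounded_input_mem: "bounded_mem B (input_mem m b)"
  unfolding bounded_mem_def
proof
  fix a
  have "\<bar>input_mem m b a\<bar> \<le> magnitude"
  proof (cases "- int m \<le> a \<and> a \<le> - 1")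
    case True
    then have "1 \<le> nat (- a)" and "nat (- a) \<le> m"
      by auto
    then show ?thesis
      using True b_le_magnitude b_pos unfolding input_mem_def by fastforce
  qed (use magnitude_ge in \<open>auto simp: input_mem_def\<close>)
  then show "real_of_int \<bar>input_mem m b a\<bar> \<le> B"
    using B_ge magnitude_ge by linarith
qed

lemma value_bounds:
  "0 < b 1" "b 1 \<le> magnitude" "0 < b m" "b m \<le> magnitude" "expo 1 < magnitude"
  "expo m < magnitude" "0 \<le> expo 1" "0 \<le> expo m"
  "0 \<le> (expo m - expo 1) div int m" "(expo m - expo 1) div int m \<le> expo m - expo 1"
  using m_pos b_pos b_le_magnitude expo_less_magnitude expo_nonneg expo_gap[of 1 m]
    zdiv_mono2[of "expo m - expo 1" 1 "int m"]
  by (simp_all add: pos_imp_zdiv_nonneg_iff)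

definition scatter_inv :: "nat \<Rightarrow> mem \<Rightarrow> bool" where
  "scatter_inv i M \<longleftrightarrow> 1 \<le> i \<and> i \<le> m + 1 \<and> bounded_mem B M \<and> pre_registers M \<and>
     M 5 = int i \<and> (\<forall>x. - 1 \<le> x \<longrightarrow> x < int m \<longrightarrow> M (101 + x) = partial_rank i x)"

definition sweep_inv :: "nat \<Rightarrow> mem \<Rightarrow> bool" where
  "sweep_inv j M \<longleftrightarrow> 2 \<le> j \<and> j \<le> m + 1 \<and> bounded_mem B M \<and> pre_registers M \<and>
     M 5 = int j \<and> (\<forall>x. - 1 \<le> x \<longrightarrow> x < int m \<longrightarrow> M (101 + x) = filled_rank j x)"

lemma pre_init: "\<exists>M'. reaches Pre B (0, input_mem m b) 14 (14, M') \<and> scatter_inv 1 M'"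
  using m_pos magnitude_ge value_bounds
  by (simp add: reaches_simps Pre_def input_mem_simps input_mem_1 bounded_input_mem
      bounded_mem_upd_small scatter_inv_def pre_registers_def partial_rank_def width_def
      expo_def[symmetric] del: bounded_mem_upd)

lemma scatter_step:
  assumes "scatter_inv i M" and "i \<le> m"
  shows "\<exists>M'. reaches Pre B (14, M) 10 (14, M') \<and> scatter_inv (Suc i) M'"
proof -
  have "1 \<le> i"
    using assms(1) by (simp add: scatter_inv_def)
  then have "0 < b i" "b i \<le> magnitude" "0 \<le> bucket i" "bucket i < int m" "expo i < magnitude"
    using assms(2) b_pos b_le_magnitude bucket_nonneg bucket_less expo_less_magnitude by auto
  moreover have "ilog2 (b i) = expo i" "(expo i - expo 1) div width = bucket i"
    by (simp_all add: expo_def bucket_def)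
  ultimately show ?thesis
    using assms magnitude_ge value_bounds expo_nonneg[of i] \<open>1 \<le> i\<close>
    by (simp add: reaches_simps Pre_def input_mem_simps bounded_mem_upd_small scatter_inv_def
        pre_registers_def partial_rank_Suc del: bounded_mem_upd)
qed

lemma scatter_loop:
  assumes "scatter_inv 1 M"
  shows "\<exists>n M'. reaches Pre B (14, M) n (14, M') \<and> n \<le> 10 * m \<and> scatter_inv (Suc m) M'"
proof -
  have "\<exists>n M'. reaches Pre B (14, M) n (14, M') \<and> n \<le> 10 * (Suc m - 1) \<and> scatter_inv (Suc m) M'"
  proof (rule reaches_loop[where I = scatter_inv])
    show "bounded_mem B M" if "scatter_inv i M" for i M
      using that by (simp add: scatter_inv_def)
    show "\<exists>n M'. reaches Pre B (14, M) n (14, M') \<and> n \<le> 10 \<and> scatter_inv (Suc i) M'"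
      if "scatter_inv i M" and "i < Suc m" for i M
      using scatter_step[OF that(1)] that(2) by auto
  qed (use assms in simp_all)
  then show ?thesis
    by simp
qed

lemma scatter_exit:
  assumes "scatter_inv (Suc m) M"
  shows "\<exists>M'. reaches Pre B (14, M) 3 (26, M') \<and> sweep_inv 2 M'"
  using assms magnitude_ge m_pos partial_rank_all_eq_filled_rank_2
  by (simp add: reaches_simps Pre_def bounded_mem_upd_small scatter_inv_def sweep_inv_def
      pre_registers_def del: bounded_mem_upd)

lemma sweep_step:
  assumes "sweep_inv j M" and "j \<le> m"
  shows "\<exists>n M'. reaches Pre B (26, M) n (26, M') \<and> n \<le> 9 \<and> sweep_inv (Suc j) M'"
proof -
  have j: "2 \<le> j" and table: "\<forall>x. - 1 \<le> x \<longrightarrow> x < int m \<longrightarrow> M (101 + x) = filled_rank j x"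
    using assms(1) by (simp_all add: sweep_inv_def)
  have prev: "M (99 + int j) = int (bucket_rank (int j - 2))"
    using table[rule_format, of "int j - 2"] j assms(2) by (simp add: filled_rank_def)
  have cur: "M (int j + 100) = filled_rank j (int j - 1)"
    using table[rule_format, of "int j - 1"] j assms(2) by (simp add: add.commute)
  have rank_le: "int (bucket_rank x) \<le> int m" for x
    using bucket_rank_le by simp
  show ?thesis
  proof (cases "\<exists>k\<in>{1..m}. bucket k = int j - 1")
    case True
    then have "filled_rank j (int j - 1) = int (bucket_rank (int j - 1))"
      and "0 < bucket_rank (int j - 1)"
      using j bucket_rank_pos[of "int j - 1"] by (simp_all add: filled_rank_def)
    then have "\<exists>M'. reaches Pre B (26, M) 7 (26, M') \<and> sweep_inv (Suc j) M'"
      using assms magnitude_ge m_pos j table cur rank_le[of "int j - 1"]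
      by (simp add: reaches_simps Pre_def bounded_mem_upd_small sweep_inv_def pre_registers_def
          filled_rank_Suc del: bounded_mem_upd)
    then show ?thesis
      by (intro exI[of _ 7]) simp
  next
    case False
    then have "M (int j + 100) = 0" and "bucket_rank (int j - 2) = bucket_rank (int j - 1)"
      using cur bucket_rank_skip[of "int j - 1"] by (auto simp: filled_rank_def)
    then have "\<exists>M'. reaches Pre B (26, M) 9 (26, M') \<and> sweep_inv (Suc j) M'"
      using assms magnitude_ge m_pos j table prev rank_le[of "int j - 2"]
      by (simp add: reaches_simps Pre_def bounded_mem_upd_small sweep_inv_def pre_registers_def
          filled_rank_Suc del: bounded_mem_upd)
    then show ?thesis
      by (intro exI[of _ 9]) simp
  qed
qed

lemma sweep_loop:
  assumes "sweep_inv 2 M"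
  shows "\<exists>n M'. reaches Pre B (26, M) n (26, M') \<and> n \<le> 9 * (m - 1) \<and> sweep_inv (Suc m) M'"
proof -
  have "\<exists>n M'. reaches Pre B (26, M) n (26, M') \<and> n \<le> 9 * (Suc m - 2) \<and> sweep_inv (Suc m) M'"
  proof (rule reaches_loop[where I = sweep_inv])
    show "bounded_mem B M" if "sweep_inv j M" for j M
      using that by (simp add: sweep_inv_def)
    show "\<exists>n M'. reaches Pre B (26, M) n (26, M') \<and> n \<le> 9 \<and> sweep_inv (Suc j) M'"
      if "sweep_inv j M" and "j < Suc m" for j M
      using sweep_step[OF that(1)] that(2) by auto
  qed (use assms m_pos in simp_all)
  then show ?thesis
    by simp
qed

lemma sweep_exit:
  assumes "sweep_inv (Suc m) M"
  shows "reaches Pre B (26, M) 2 (37, M) \<and> preprocessed M"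
  using assms
  by (simp add: reaches_simps Pre_def sweep_inv_def pre_registers_def preprocessed_def
      filled_rank_def)

lemma pre_runs:
  "\<exists>n M'. runs Pre (input_mem m b) n B M' \<and> n \<le> 30 * m \<and> bounded_mem B M' \<and> preprocessed M'"
proof -
  obtain M1 where 1: "reaches Pre B (0, input_mem m b) 14 (14, M1)" "scatter_inv 1 M1"
    using pre_init by blast
  obtain n2 M2 where 2: "reaches Pre B (14, M1) n2 (14, M2)" "n2 \<le> 10 * m" "scatter_inv (Suc m) M2"
    using scatter_loop[OF 1(2)] by blast
  obtain M3 where 3: "reaches Pre B (14, M2) 3 (26, M3)" "sweep_inv 2 M3"
    using scatter_exit[OF 2(3)] by blast
  obtain n4 M4 where 4: "reaches Pre B (26, M3) n4 (26, M4)" "n4 \<le> 9 * (m - 1)" "sweep_inv (Suc m) M4"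
    using sweep_loop[OF 3(2)] by blast
  have 5: "reaches Pre B (26, M4) 2 (37, M4)" "preprocessed M4"
    using sweep_exit[OF 4(3)] by simp_all
  have "reaches Pre B (0, input_mem m b) (14 + n2 + 3 + n4 + 2) (37, M4)"
    using reaches_add[OF reaches_add[OF reaches_add[OF reaches_add[OF 1(1) 2(1)] 3(1)] 4(1)] 5(1)] .
  moreover have "14 + n2 + 3 + n4 + 2 \<le> 30 * m"
    using 2(2) 4(2) m_pos by linarith
  moreover have "length Pre \<le> 37"
    by (simp add: Pre_def)
  ultimately show ?thesis
    using runs_if_reaches 5(2) reaches_bounded_mem by fastforce
qed

end

section \<open>Queries\<close>

text \<open>Register 0 holds t on entry and the rank on exit. Registers 5 and 11 hold the bounds lo and hi
of the binary search; the preprocessing registers 1, 2, 3, 4, 8, 9, 10 and the table are only read.\<close>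
definition Qry :: prog where "Qry = [
 Sub 6 8 4, Load 7 6, Jle 7 0 5, Const 0 0, Jle 8 8 30,
 Sub 6 8 1, Load 7 6, Jle 7 0 29, Log2 7 0, Sub 7 7 2, Div 7 7 3, Add 6 7 10, Load 5 6,
 Add 6 7 9, Load 11 6, Const 12 2,
 Jle 11 5 27, Add 6 5 11, Add 6 6 4, Div 6 6 12, Sub 7 8 6, Load 7 7, Jle 7 0 25,
 Sub 11 6 4, Jle 8 8 16, Add 5 6 8, Jle 8 8 16, Add 0 5 8, Jle 8 8 30, Add 0 1 8]"

locale doubling_seq_query = doubling_seq_bounded +
  fixes t :: int and M1 :: mem
  assumes t_bound: "real_of_int \<bar>t\<bar> \<le> B"
    and M1_bounded: "bounded_mem B M1" and M1_preprocessed: "preprocessed M1"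
begin

lemma M1_registers:
  "M1 1 = int m" "M1 2 = expo 1" "M1 3 = width" "M1 4 = 1" "M1 8 = 0" "M1 9 = 101" "M1 10 = 100"
  "\<forall>a<0. M1 a = input_mem m b a"
  using M1_preprocessed by (simp_all add: preprocessed_def pre_registers_def)

lemma M1_table: "- 1 \<le> x \<Longrightarrow> x < int m \<Longrightarrow> M1 (101 + x) = int (bucket_rank x)"
  using M1_preprocessed by (simp add: preprocessed_def)

lemma query_start_bounded: "bounded_mem B (M1(0 := t))"
  using M1_bounded t_bound by simp

lemma query_below:
  assumes "t < b 1"
  shows "\<exists>M'. reaches Qry B (0, M1(0 := t)) 5 (30, M') \<and> M' 0 = int (rank m b t)"
proof -
  have "rank m b t = 0"
    using assms b_mono[of 1] by (intro rank_eqI) force+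
  then show ?thesis
    using assms M1_registers M1_bounded query_start_bounded magnitude_ge value_bounds m_pos
    by (simp add: reaches_simps Qry_def input_mem_1 bounded_mem_upd_small del: bounded_mem_upd)
qed

lemma query_above:
  assumes "b 1 \<le> t" and "b m \<le> t"
  shows "\<exists>M'. reaches Qry B (0, M1(0 := t)) 7 (30, M') \<and> M' 0 = int (rank m b t)"
proof -
  have "rank m b t = m"
    using assms b_mono by (intro rank_eqI) force+
  then show ?thesis
    using assms M1_registers M1_bounded query_start_bounded magnitude_ge value_bounds m_pos
    by (simp add: reaches_simps Qry_def input_mem_1 input_mem_simps bounded_mem_upd_small
        del: bounded_mem_upd)
qed

definition search_state :: "nat \<Rightarrow> nat \<Rightarrow> mem \<Rightarrow> bool" where
  "search_state lo hi M \<longleftrightarrow> rank_bracket t lo hi \<and> bounded_mem B M \<and>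
     M 0 = t \<and> M 1 = int m \<and> M 4 = 1 \<and> M 8 = 0 \<and> M 12 = 2 \<and> M 5 = int lo \<and> M 11 = int hi \<and>
     (\<forall>a<0. M a = input_mem m b a)"

lemma query_enters_search:
  assumes "b 1 \<le> t" and "t < b m"
  defines "q \<equiv> query_bucket t"
  shows "\<exists>M. reaches Qry B (0, M1(0 := t)) 14 (16, M) \<and>
    search_state (bucket_rank (q - 1)) (bucket_rank q) M"
proof -
  have q: "0 \<le> q" "q < int m"
    using query_bucket_bounds[OF assms(1,2)] unfolding q_def by simp_all
  have "0 < t" and "ilog2 t < magnitude"
    using assms value_bounds ilog2_less_self[of t] by linarith+
  moreover have "(ilog2 t - expo 1) div width = q" and "0 \<le> ilog2 t - expo 1"
    using assms ilog2_mono[of "b 1" t] value_bounds unfolding q_def query_bucket_def expo_def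
    by simp_all
  moreover have "M1 (q + 100) = int (bucket_rank (q - 1))" and "M1 (q + 101) = int (bucket_rank q)"
    using M1_table[of "q - 1"] M1_table[of q] q by (simp_all add: add.commute)
  moreover have "int (bucket_rank (q - 1)) \<le> int m" and "int (bucket_rank q) \<le> int m"
    using bucket_rank_le by simp_all
  ultimately show ?thesis
    using assms q M1_registers M1_bounded query_start_bounded magnitude_ge value_bounds m_pos
      rank_bracket_query_bucket[of t]
    by (simp add: reaches_simps Qry_def input_mem_1 input_mem_simps bounded_mem_upd_small
        search_state_def q_def del: bounded_mem_upd)
qed

lemma search_step:
  assumes "search_state lo hi M" and "lo < hi"
  shows "\<exists>lo' hi' M'. reaches Qry B (16, M) 9 (16, M') \<and> search_state lo' hi' M' \<and>
    hi' - lo' \<le> (hi - lo) div 2"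
proof -
  define mid where "mid = (lo + hi + 1) div 2"
  have bracket: "rank_bracket t lo hi"
    using assms(1) by (simp add: search_state_def)
  then have mid: "lo < mid" "mid \<le> hi" "1 \<le> mid" "hi \<le> m"
    using assms(2) unfolding mid_def rank_bracket_def by auto
  have b_mid: "0 < b mid" "b mid \<le> magnitude"
    using mid b_pos b_le_magnitude by simp_all
  have mid_int: "(int lo + int hi + 1) div 2 = int mid" "int (mid - 1) = int mid - 1"
    using mid unfolding mid_def by (simp_all add: zdiv_int)
  have halved: "hi - mid \<le> (hi - lo) div 2" "mid - 1 - lo \<le> (hi - lo) div 2"
    unfolding mid_def by linarith+
  have split: "if b mid \<le> t then rank_bracket t mid hi else rank_bracket t lo (mid - 1)"
    using rank_bracket_split[OF bracket assms(2)] unfolding mid_def .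
  show ?thesis
  proof (cases "b mid \<le> t")
    case True
    then have "\<exists>M'. reaches Qry B (16, M) 9 (16, M') \<and> search_state mid hi M'"
      using assms split b_mid mid_int mid magnitude_ge
      by (simp add: reaches_simps Qry_def input_mem_simps bounded_mem_upd_small search_state_def
          del: bounded_mem_upd)
    then show ?thesis
      using halved by blast
  next
    case False
    then have "\<exists>M'. reaches Qry B (16, M) 9 (16, M') \<and> search_state lo (mid - 1) M'"
      using assms split b_mid mid_int mid magnitude_ge
      by (simp add: reaches_simps Qry_def input_mem_simps bounded_mem_upd_small search_state_def
          del: bounded_mem_upd)
    then show ?thesis
      using halved by blast
  qed
qed

lemma search_exit:
  assumes "search_state lo hi M" and "\<not> lo < hi"
  shows "\<exists>M'. reaches Qry B (16, M) 3 (30, M') \<and> M' 0 = int (rank m b t)"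
proof -
  have "lo = hi" and "hi \<le> m"
    using assms unfolding search_state_def rank_bracket_def by simp_all
  then have "rank m b t = lo"
    using assms(1) rank_bracket_rank unfolding search_state_def by simp
  then show ?thesis
    using assms \<open>lo = hi\<close> \<open>hi \<le> m\<close> magnitude_ge
    by (simp add: reaches_simps Qry_def bounded_mem_upd_small search_state_def
        del: bounded_mem_upd)
qed

lemma search_loop:
  "search_state lo hi M \<Longrightarrow> \<exists>n M'. reaches Qry B (16, M) n (30, M') \<and>
     real n \<le> log_cost 9 (hi - lo) + 3 \<and> M' 0 = int (rank m b t)"
proof (induction "hi - lo" arbitrary: lo hi M rule: less_induct)
  case less
  show ?case
  proof (cases "lo < hi")
    case True
    obtain lo' hi' M' where step: "reaches Qry B (16, M) 9 (16, M')" "search_state lo' hi' M'"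
      "hi' - lo' \<le> (hi - lo) div 2"
      using search_step[OF less.prems True] by blast
    then obtain n M'' where rest: "reaches Qry B (16, M') n (30, M'')"
      "real n \<le> log_cost 9 (hi' - lo') + 3" "M'' 0 = int (rank m b t)"
      using less.hyps[of hi' lo'] True by fastforce
    have "9 + log_cost 9 (hi' - lo') \<le> log_cost 9 (hi - lo)"
      using True step(3) by (intro log_cost_halve) simp_all
    then have "real (9 + n) \<le> log_cost 9 (hi - lo) + 3"
      using rest(2) by simp
    then show ?thesis
      using reaches_add[OF step(1) rest(1)] rest(3) by blast
  next
    case False
    then show ?thesis
      using search_exit[OF less.prems] log_cost_nonneg[of 9 "hi - lo"]
      by (fastforce intro!: exI[of _ 3])
  qed
qed

lemma query_runs:
  "\<exists>n M'. runs Qry (M1(0 := t)) n B M' \<and> real n \<le> 50 * (1 + log 2 (log 2 D)) \<and>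
     M' 0 = int (rank m b t)"
proof -
  define L where "L = log 2 (log 2 D)"
  have log_D: "1 \<le> log 2 D"
    using D_ge by simp
  then have "0 \<le> L"
    unfolding L_def by simp
  have "\<exists>n M'. reaches Qry B (0, M1(0 := t)) n (30, M') \<and> real n \<le> 50 * (1 + L) \<and>
     M' 0 = int (rank m b t)"
  proof (cases "t < b 1")
    case True
    then obtain M' where "reaches Qry B (0, M1(0 := t)) 5 (30, M')" "M' 0 = int (rank m b t)"
      using query_below by blast
    with \<open>0 \<le> L\<close> show ?thesis
      by (intro exI[of _ 5] exI[of _ M']) simp
  next
    case above_first: False
    show ?thesis
    proof (cases "b m \<le> t")
      case True
      then obtain M' where "reaches Qry B (0, M1(0 := t)) 7 (30, M')" "M' 0 = int (rank m b t)"
        using query_above above_first by fastforce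
      with \<open>0 \<le> L\<close> show ?thesis
        by (intro exI[of _ 7] exI[of _ M']) simp
    next
      case False
      define q where "q = query_bucket t"
      obtain M where start: "reaches Qry B (0, M1(0 := t)) 14 (16, M)"
        "search_state (bucket_rank (q - 1)) (bucket_rank q) M"
        using query_enters_search above_first False unfolding q_def by fastforce
      obtain n M' where search: "reaches Qry B (16, M) n (30, M')"
        "real n \<le> log_cost 9 (bucket_rank q - bucket_rank (q - 1)) + 3" "M' 0 = int (rank m b t)"
        using search_loop[OF start(2)] by blast
      have "real (bucket_rank q - bucket_rank (q - 1)) \<le> log 2 D + 2"
        using bucket_size[of q] width_upper bucket_rank_mono[of "q - 1" q] by (simp add: of_nat_diff)
      then have "log_cost 9 (bucket_rank q - bucket_rank (q - 1)) \<le> 9 * (1 + log 2 (log 2 D + 2))"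
        using log_D by (intro log_cost_le) simp_all
      also have "log 2 (log 2 D + 2) \<le> log 2 (4 * log 2 D)"
        using log_D by simp
      also have "\<dots> = 2 + L"
        using log_D log_pow_cancel[of "2::real" 2] unfolding L_def by (simp add: log_mult)
      finally have "real (14 + n) \<le> 50 * (1 + L)"
        using search(2) \<open>0 \<le> L\<close> by simp
      then show ?thesis
        using reaches_add[OF start(1) search(1)] search(3) by blast
    qed
  qed
  then show ?thesis
    using runs_if_reaches[of Qry B] unfolding L_def by (fastforce simp: Qry_def)
qed

end

context doubling_seq
begin

lemma pre_runs_within_magnitude:
  "\<exists>n M1. real n \<le> 30 * real m \<and> runs Pre (input_mem m b) n (real_of_int magnitude ^ 8) M1 \<and>
     bounded_mem (real_of_int magnitude ^ 8) M1 \<and> preprocessed M1"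
proof -
  interpret doubling_seq_bounded m b D "real_of_int magnitude ^ 8"
    using le_pow8[of "real_of_int magnitude"] magnitude_ge by unfold_locales simp
  obtain n M1 where "runs Pre (input_mem m b) n (real_of_int magnitude ^ 8) M1" "n \<le> 30 * m"
    "bounded_mem (real_of_int magnitude ^ 8) M1" "preprocessed M1"
    using pre_runs by blast
  moreover have "real n \<le> 30 * real m"
    using \<open>n \<le> 30 * m\<close> by simp
  ultimately show ?thesis
    by blast
qed

lemma query_runs_within_magnitude:
  assumes "bounded_mem (real_of_int magnitude ^ 8) M1" and "preprocessed M1"
  shows "\<exists>n M2. real n \<le> 50 * (1 + log 2 (log 2 D)) \<and>
    runs Qry (M1(0 := t)) n (real_of_int (max 2 (max (int m) (max (b m) \<bar>t\<bar>))) ^ 8) M2 \<and>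
    M2 0 = int (rank m b t)"
proof -
  define X where "X = real_of_int (max 2 (max (int m) (max (b m) \<bar>t\<bar>)))"
  have "magnitude \<le> max 2 (max (int m) (max (b m) \<bar>t\<bar>))"
    unfolding magnitude_def by (intro max.mono) simp_all
  then have "real_of_int magnitude \<le> X" and "real_of_int \<bar>t\<bar> \<le> X" and "2 \<le> X"
    unfolding X_def by (simp_all add: le_max_iff_disj)
  moreover have "103 * X \<le> X ^ 8"
    using le_pow8[OF \<open>2 \<le> X\<close>] .
  moreover have "real_of_int magnitude ^ 8 \<le> X ^ 8"
    using \<open>real_of_int magnitude \<le> X\<close> magnitude_ge by (intro power_mono) simp_all
  ultimately interpret doubling_seq_query m b D "X ^ 8" t M1
    using assms bounded_mem_mono by unfold_locales simp_all
  show ?thesis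
    using query_runs unfolding X_def by blast
qed

end

theorem mainTheorem11:
  "\<exists>(Pre::prog) (Qry::prog) (c1::real) (c2::real) (c::nat).
     \<forall>(D::real) (m::nat) (b::nat \<Rightarrow> int).
       D \<ge> 2 \<longrightarrow> m \<ge> 1 \<longrightarrow> (\<forall>i\<in>{1..m}. b i > 0) \<longrightarrow>
       (\<forall>i. 1 \<le> i \<and> i < m \<longrightarrow> b i < b (Suc i)) \<longrightarrow>
       (\<forall>i. 1 \<le> i \<and> i < m \<longrightarrow>
          2 \<le> real_of_int (b (Suc i)) / real_of_int (b i) \<and>
          real_of_int (b (Suc i)) / real_of_int (b i) \<le> D) \<longrightarrow>
       (\<exists>M1 k.
          real k \<le> c1 * real m \<and>
          runs Pre (input_mem m b) k (real_of_int (max 2 (max (int m) (b m))) ^ c) M1 \<and>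
          (\<forall>t::int. \<exists>k' M2.
             real k' \<le> c2 * (1 + log 2 (log 2 D)) \<and>
             runs Qry (M1(0 := t)) k'
               (real_of_int (max 2 (max (int m) (max (b m) \<bar>t\<bar>))) ^ c) M2 \<and>
             M2 0 = int (rank m b t)))"
proof (rule exI[of _ Pre], rule exI[of _ Qry], rule exI[of _ 30], rule exI[of _ 50], rule exI[of _ 8],
    intro allI impI)
  fix D :: real and m :: nat and b :: "nat \<Rightarrow> int"
  assume "D \<ge> 2" "m \<ge> 1" "\<forall>i\<in>{1..m}. b i > 0" "\<forall>i. 1 \<le> i \<and> i < m \<longrightarrow> b i < b (Suc i)"
    "\<forall>i. 1 \<le> i \<and> i < m \<longrightarrow>
       2 \<le> real_of_int (b (Suc i)) / real_of_int (b i) \<and>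
       real_of_int (b (Suc i)) / real_of_int (b i) \<le> D"
  then interpret doubling_seq m b D
    by (unfold_locales; simp)
  obtain n M1 where "real n \<le> 30 * real m" "runs Pre (input_mem m b) n (real_of_int magnitude ^ 8) M1"
    "bounded_mem (real_of_int magnitude ^ 8) M1" "preprocessed M1"
    using pre_runs_within_magnitude by blast
  then show "\<exists>M1 k. real k \<le> 30 * real m \<and>
      runs Pre (input_mem m b) k (real_of_int (max 2 (max (int m) (b m))) ^ 8) M1 \<and>
      (\<forall>t::int. \<exists>k' M2. real k' \<le> 50 * (1 + log 2 (log 2 D)) \<and>
         runs Qry (M1(0 := t)) k' (real_of_int (max 2 (max (int m) (max (b m) \<bar>t\<bar>))) ^ 8) M2 \<and>
         M2 0 = int (rank m b t))"
    using query_runs_within_magnitude unfolding magnitude_def by blast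
qed

end
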